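(* Fix integers $k \ge 3$ and $i \in \{2,\dots,k-1\}$, and let $T = \{1,\dots,k\}\setminus\{i\}$. Let $d \ge 1$ and let $X \subset \mathbb{Z}_k^d$ be a hole in $\mathbb{Z}_k^d$. Then for any distinct elements $x_1,\dots,x_m \in X$, the set $(X\setminus\{x_1,\dots,x_m\})^{\dagger m}$ is a hole in $\mathbb{Z}_k^{d+m}$.
   Context: $\mathbb{Z}_k$ denotes the integers modulo $k$, with elements $0,\dots,k-1$. A copy of $T$ in $\mathbb{Z}_k^e$ is a set $\{x + j e_s : j \in \mathbb{Z}_k,\ j \ne j_0\}$ for some $x \in \mathbb{Z}_k^e$, $s\in\{1,\dots,e\}$ ($e_s$ the $s$-th unit vector), $j_0\in\mathbb{Z}_k$ (a coordinate line minus one point). A set $Y \subset \mathbb{Z}_k^e$ is a hole in $\mathbb{Z}_k^e$ if $\mathbb{Z}_k^e \setminus Y$ is a disjoint union of copies of $T$. For $S \subset \mathbb{Z}_k^e$, define $S^{\dagger} = (S \times \{0\}) \cup \{c_{e+1,e+1}\} \subset \mathbb{Z}_k^{e+1}$, where $c_{e+1,e+1}$ is the point of $\mathbb{Z}_k^{e+1}$ with last coordinate $k-1$ and all other coordinates $0$. For $m\ge1$, $S^{\dagger m}$ denotes the result of $m$ consecutive applications of $\dagger$ to $S$ (each time in the dimension of the current ambient torus), a subset of $\mathbb{Z}_k^{e+m}$. *)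

theory Defs
  imports Main
begin

text \<open>Points of Z_k^e are lists of length e with entries in {0..<k};
  coordinate s (1-based in the paper) is list index s-1 here.\<close>

definition torus :: "nat \<Rightarrow> nat \<Rightarrow> nat list set" where
  "torus k e = {x. length x = e \<and> (\<forall>c\<in>set x. c < k)}"

definition copy_T :: "nat \<Rightarrow> nat \<Rightarrow> nat list set \<Rightarrow> bool" where
  "copy_T k e C \<longleftrightarrow> (\<exists>x s j0. x \<in> torus k e \<and> s < e \<and> j0 < k \<and>
      C = {x[s := (x ! s + j) mod k] | j. j < k \<and> j \<noteq> j0})"

definition is_hole :: "nat \<Rightarrow> nat \<Rightarrow> nat list set \<Rightarrow> bool" where
  "is_hole k e Y \<longleftrightarrow> Y \<subseteq> torus k e \<and>
     (\<exists>P. (\<forall>C\<in>P. copy_T k e C) \<and> pairwise disjnt P \<and> \<Union>P = torus k e - Y)"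

definition dagger :: "nat \<Rightarrow> nat \<Rightarrow> nat list set \<Rightarrow> nat list set" where
  "dagger k e S = (\<lambda>x. x @ [0]) ` S \<union> {replicate e 0 @ [k - 1]}"

fun dagger_pow :: "nat \<Rightarrow> nat \<Rightarrow> nat \<Rightarrow> nat list set \<Rightarrow> nat list set" where
  "dagger_pow k e 0 S = S"
| "dagger_pow k e (Suc m) S = dagger k (e + m) (dagger_pow k e m S)"

end

theory Submission imports Defs begin

text \<open>Stack k holes H 0, ..., H (k-1) of Z_k^e as the layers of Z_k^(e+1) (last coordinate t) and
  delete from them the column through a point y lying in every hole except H t0: the tilings of the
  layers together with this column, a copy of T, tile the complement. Every point of Z_k^e is a hole
  (stack copies of a point hole of one dimension lower), and stacking Y, the point y and the origin
  shows that (Y - {y})\<dagger> is a hole for every y in a hole Y. Removing the points one at a time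
  and applying \<dagger> after each removal yields the theorem.\<close>

definition tiling :: "nat \<Rightarrow> nat \<Rightarrow> nat list set set \<Rightarrow> nat list set \<Rightarrow> bool" where
  "tiling k e P A \<longleftrightarrow> (\<forall>C\<in>P. copy_T k e C) \<and> pairwise disjnt P \<and> \<Union>P = A"

definition layer :: "nat \<Rightarrow> nat list set \<Rightarrow> nat list set" where
  "layer t A = (\<lambda>x. x @ [t]) ` A"

definition column :: "nat \<Rightarrow> nat list \<Rightarrow> nat \<Rightarrow> nat list set" where
  "column k y t0 = {y @ [j] | j. j < k \<and> j \<noteq> t0}"

lemma is_hole_iff_tiling:
  "is_hole k e Y \<longleftrightarrow> Y \<subseteq> torus k e \<and> (\<exists>P. tiling k e P (torus k e - Y))"
  unfolding is_hole_def tiling_def ..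

lemma torus_Suc_iff: "w \<in> torus k (Suc e) \<longleftrightarrow> (\<exists>x t. w = x @ [t] \<and> x \<in> torus k e \<and> t < k)"
  by (cases w rule: rev_cases) (auto simp: torus_def)

lemma snoc_in_torus_Suc [simp]: "x @ [t] \<in> torus k (Suc e) \<longleftrightarrow> x \<in> torus k e \<and> t < k"
  by (auto simp: torus_def)

lemma snoc_in_layer_iff [simp]: "x @ [t] \<in> layer s A \<longleftrightarrow> s = t \<and> x \<in> A"
  by (auto simp: layer_def)

lemma snoc_in_column_iff [simp]: "x @ [j] \<in> column k y t0 \<longleftrightarrow> x = y \<and> j < k \<and> j \<noteq> t0"
  by (auto simp: column_def)

lemma torus_Suc_Diff_UN_layer:
  "torus k (Suc e) - (\<Union>t<k. layer t (H t)) = (\<Union>t<k. layer t (torus k e - H t))"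
  by (auto simp: torus_Suc_iff) (auto simp: layer_def)

lemma copy_T_layer:
  assumes "copy_T k e C" "t < k"
  shows "copy_T k (Suc e) (layer t C)"
proof -
  obtain x s j0 where x: "x \<in> torus k e" "s < e" "j0 < k"
    and C: "C = {x[s := (x ! s + j) mod k] | j. j < k \<and> j \<noteq> j0}"
    using assms(1) unfolding copy_T_def by blast
  have "layer t C = {(x @ [t])[s := ((x @ [t]) ! s + j) mod k] | j. j < k \<and> j \<noteq> j0}"
    using x unfolding C layer_def by (auto simp: torus_def list_update_append nth_append)
  then show ?thesis
    unfolding copy_T_def using x assms(2) by (intro exI[of _ "x @ [t]"] exI[of _ s] exI[of _ j0]) auto
qed

lemma copy_T_column:
  assumes "y \<in> torus k e" "t0 < k"
  shows "copy_T k (Suc e) (column k y t0)"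
proof -
  have "column k y t0 = {(y @ [0])[e := ((y @ [0]) ! e + j) mod k] | j. j < k \<and> j \<noteq> t0}"
    using assms unfolding column_def
    by (auto simp: torus_def list_update_append nth_append) (metis mod_less)
  then show ?thesis
    unfolding copy_T_def using assms by (intro exI[of _ "y @ [0]"] exI[of _ e] exI[of _ t0]) auto
qed

lemma tiling_singleton: "copy_T k e C \<Longrightarrow> tiling k e {C} C"
  by (simp add: tiling_def)

lemma tiling_UN:
  assumes "\<And>t. t \<in> I \<Longrightarrow> tiling k e (P t) (A t)"
    and "\<And>s t. s \<in> I \<Longrightarrow> t \<in> I \<Longrightarrow> s \<noteq> t \<Longrightarrow> disjnt (A s) (A t)"
  shows "tiling k e (\<Union>t\<in>I. P t) (\<Union>t\<in>I. A t)"
  unfolding tiling_def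
proof (intro conjI)
  show "pairwise disjnt (\<Union>t\<in>I. P t)"
  proof (rule pairwiseI)
    fix C D assume "C \<in> (\<Union>t\<in>I. P t)" "D \<in> (\<Union>t\<in>I. P t)" "C \<noteq> D"
    then obtain s t where st: "s \<in> I" "t \<in> I" "C \<in> P s" "D \<in> P t"
      by blast
    show "disjnt C D"
    proof (cases "s = t")
      case True
      then show ?thesis
        using assms(1)[OF st(1)] st \<open>C \<noteq> D\<close> by (auto simp: tiling_def pairwise_def)
    next
      case False
      have "C \<subseteq> A s" "D \<subseteq> A t"
        using assms(1) st by (auto simp: tiling_def)
      then show ?thesis
        using assms(2)[OF st(1,2) False] by (auto simp: disjnt_def)
    qed
  qed
  show "\<forall>C\<in>\<Union>t\<in>I. P t. copy_T k e C"
    using assms(1) by (auto simp: tiling_def)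
  have "\<Union>(\<Union>t\<in>I. P t) = (\<Union>t\<in>I. \<Union>(P t))"
    by blast
  also have "\<dots> = (\<Union>t\<in>I. A t)"
    using assms(1) by (simp add: tiling_def)
  finally show "\<Union>(\<Union>t\<in>I. P t) = (\<Union>t\<in>I. A t)" .
qed

lemma tiling_Un:
  assumes "tiling k e P A" "tiling k e Q B" "disjnt A B"
  shows "tiling k e (P \<union> Q) (A \<union> B)"
proof -
  have "tiling k e (\<Union>b\<in>{True, False}. if b then P else Q) (\<Union>b\<in>{True, False}. if b then A else B)"
    using assms by (intro tiling_UN) (auto simp: disjnt_sym)
  then show ?thesis
    by (simp add: Un_commute)
qed

lemma tiling_layer:
  assumes "tiling k e P A" "t < k"
  shows "tiling k (Suc e) (layer t ` P) (layer t A)"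
  unfolding tiling_def
proof (intro conjI)
  show "pairwise disjnt (layer t ` P)"
  proof (rule pairwiseI)
    fix C' D' assume "C' \<in> layer t ` P" "D' \<in> layer t ` P" "C' \<noteq> D'"
    then obtain C D where "C \<in> P" "D \<in> P" "C \<noteq> D" "C' = layer t C" "D' = layer t D"
      by blast
    with assms(1) show "disjnt C' D'"
      unfolding tiling_def pairwise_def disjnt_def by (auto simp: layer_def)
  qed
qed (use assms copy_T_layer in \<open>auto simp: tiling_def layer_def\<close>)

lemma is_hole_stack:
  assumes holes: "\<And>t. t < k \<Longrightarrow> is_hole k e (H t)"
    and y: "y \<in> torus k e" and t0: "t0 < k"
    and y_in_H: "\<And>t. t < k \<Longrightarrow> t \<noteq> t0 \<Longrightarrow> y \<in> H t"
  shows "is_hole k (Suc e) ((\<Union>t<k. layer t (H t)) - column k y t0)"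
proof -
  obtain P where P: "\<And>t. t < k \<Longrightarrow> tiling k e (P t) (torus k e - H t)"
    using holes unfolding is_hole_iff_tiling by metis
  let ?A = "\<Union>t<k. layer t (torus k e - H t)"
  have "tiling k (Suc e) (\<Union>t<k. layer t ` P t) ?A"
    by (rule tiling_UN) (simp_all add: P tiling_layer, auto simp: layer_def disjnt_def)
  moreover have "tiling k (Suc e) {column k y t0} (column k y t0)"
    by (rule tiling_singleton[OF copy_T_column[OF y t0]])
  moreover have "disjnt ?A (column k y t0)"
    using y_in_H by (auto simp: layer_def column_def disjnt_def)
  ultimately have "tiling k (Suc e) ((\<Union>t<k. layer t ` P t) \<union> {column k y t0}) (?A \<union> column k y t0)"
    by (rule tiling_Un)
  moreover have "?A \<union> column k y t0 = torus k (Suc e) - ((\<Union>t<k. layer t (H t)) - column k y t0)"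
  proof -
    have "column k y t0 \<subseteq> torus k (Suc e)"
      using y by (auto simp: column_def)
    then show ?thesis
      unfolding torus_Suc_Diff_UN_layer[symmetric] by blast
  qed
  moreover have "(\<Union>t<k. layer t (H t)) - column k y t0 \<subseteq> torus k (Suc e)"
  proof -
    have "x \<in> torus k e" if "t < k" "x \<in> H t" for t x
      using holes[OF that(1)] that(2) by (auto simp: is_hole_def)
    then show ?thesis
      by (auto simp: layer_def)
  qed
  ultimately show ?thesis
    unfolding is_hole_iff_tiling by metis
qed

lemma is_hole_singleton: "a \<in> torus k e \<Longrightarrow> is_hole k e {a}"
proof (induction e arbitrary: a)
  case 0
  then show ?case
    by (auto simp: is_hole_iff_tiling tiling_def torus_def intro: exI[of _ "{}"])
next
  case (Suc e)
  then obtain x s where a: "a = x @ [s]" "x \<in> torus k e" "s < k"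
    unfolding torus_Suc_iff by blast
  have "is_hole k (Suc e) ((\<Union>t<k. layer t {x}) - column k x s)"
    using Suc.IH[OF a(2)] a by (intro is_hole_stack) auto
  moreover have "(\<Union>t<k. layer t {x}) - column k x s = {a}"
    using a by (auto simp: layer_def column_def)
  ultimately show ?case
    by simp
qed

lemma is_hole_dagger_remove:
  assumes Y: "is_hole k e Y" and "y \<in> Y" and "k \<ge> 2"
  shows "is_hole k (Suc e) (dagger k e (Y - {y}))"
proof -
  have y: "y \<in> torus k e"
    using Y \<open>y \<in> Y\<close> by (auto simp: is_hole_def)
  have origin: "replicate e 0 \<in> torus k e"
    using \<open>k \<ge> 2\<close> by (auto simp: torus_def)
  define H where "H t = (if t = 0 then Y else if t = k - 1 then {replicate e 0} else {y})" for t
  have "is_hole k (Suc e) ((\<Union>t<k. layer t (H t)) - column k y (k - 1))"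
    using \<open>k \<ge> 2\<close> \<open>y \<in> Y\<close> Y is_hole_singleton[OF y] is_hole_singleton[OF origin]
    by (intro is_hole_stack[OF _ y]) (auto simp: H_def)
  moreover have "(\<Union>t<k. layer t (H t)) - column k y (k - 1) = dagger k e (Y - {y})"
  proof (intro set_eqI iffI)
    fix w assume "w \<in> (\<Union>t<k. layer t (H t)) - column k y (k - 1)"
    then obtain t x where "t < k" "x \<in> H t" "w = x @ [t]" "w \<notin> column k y (k - 1)"
      by (auto simp: layer_def)
    then show "w \<in> dagger k e (Y - {y})"
      using \<open>k \<ge> 2\<close> by (auto simp: H_def column_def dagger_def split: if_splits)
  next
    fix w assume "w \<in> dagger k e (Y - {y})"
    then consider x where "x \<in> Y" "x \<noteq> y" "w = x @ [0]" | "w = replicate e 0 @ [k - 1]"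
      by (auto simp: dagger_def)
    then show "w \<in> (\<Union>t<k. layer t (H t)) - column k y (k - 1)"
    proof cases
      case 1
      then show ?thesis
        using \<open>k \<ge> 2\<close> by (auto simp: H_def layer_def column_def intro!: bexI[of _ 0])
    next
      case 2
      then show ?thesis
        using \<open>k \<ge> 2\<close> by (auto simp: H_def layer_def column_def intro!: bexI[of _ "k - 1"])
    qed
  qed
  ultimately show ?thesis
    by simp
qed

lemma dagger_Diff_singleton:
  "k \<ge> 2 \<Longrightarrow> dagger k e (S - {x}) = dagger k e S - {x @ [0]}"
  by (auto simp: dagger_def)

lemma dagger_pow_Diff_singleton:
  assumes "k \<ge> 2"
  shows "dagger_pow k e m (S - {x}) = dagger_pow k e m S - {x @ replicate m 0}"
proof (induction m)
  case (Suc m)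
  have "dagger_pow k e (Suc m) (S - {x}) = dagger k (e + m) (dagger_pow k e m S - {x @ replicate m 0})"
    by (simp only: dagger_pow.simps Suc.IH)
  also have "\<dots> = dagger k (e + m) (dagger_pow k e m S) - {(x @ replicate m 0) @ [0]}"
    using assms by (rule dagger_Diff_singleton)
  finally show ?case
    by (simp add: replicate_append_same)
qed simp

lemma append_replicate_zero_in_dagger_pow: "x \<in> S \<Longrightarrow> x @ replicate m 0 \<in> dagger_pow k e m S"
proof (induction m)
  case (Suc m)
  have "x @ replicate (Suc m) 0 = (x @ replicate m 0) @ [0]"
    by (simp add: replicate_append_same[symmetric])
  with Suc show ?case
    by (simp add: dagger_def)
qed simp

lemma is_hole_dagger_pow_remove:
  assumes "k \<ge> 2" "is_hole k d X" "distinct xs" "set xs \<subseteq> X"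
  shows "is_hole k (d + length xs) (dagger_pow k d (length xs) (X - set xs))"
  using assms(3,4)
proof (induction xs)
  case (Cons x xs)
  let ?S = "dagger_pow k d (length xs) (X - set xs)"
  have "is_hole k (d + length xs) ?S"
    using Cons.prems by (intro Cons.IH) auto
  moreover have "x @ replicate (length xs) 0 \<in> ?S"
    using Cons.prems by (intro append_replicate_zero_in_dagger_pow) auto
  ultimately have hole: "is_hole k (Suc (d + length xs)) (dagger k (d + length xs) (?S - {x @ replicate (length xs) 0}))"
    using assms(1) by (rule is_hole_dagger_remove)
  have "X - set (x # xs) = (X - set xs) - {x}"
    by auto
  then have "dagger_pow k d (Suc (length xs)) (X - set (x # xs))
      = dagger k (d + length xs) (?S - {x @ replicate (length xs) 0})"
    by (simp only: dagger_pow.simps dagger_pow_Diff_singleton[OF assms(1)])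
  with hole show ?case
    by (simp only: length_Cons add_Suc_right)
qed (use assms in simp)

theorem corollary6:
  fixes k i d :: nat and X :: "nat list set" and xs :: "nat list list"
  assumes "k \<ge> 3" and "2 \<le> i" and "i \<le> k - 1"
    and "d \<ge> 1"
    and "is_hole k d X"
    and "xs \<noteq> []" and "distinct xs" and "set xs \<subseteq> X"
  shows "is_hole k (d + length xs) (dagger_pow k d (length xs) (X - set xs))"
proof -
  have "k \<ge> 2"
    using \<open>k \<ge> 3\<close> by simp
  then show ?thesis
    using \<open>is_hole k d X\<close> \<open>distinct xs\<close> \<open>set xs \<subseteq> X\<close> by (rule is_hole_dagger_pow_remove)
qed

end
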